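(* Let $n\ge 2$. Every element $\pi\in D_n$ has a unique presentation of the form $$\pi = w_{1}^{j_{1}} \cdot t_{2}^{i_{2}} \cdot w_{2}^{j_{2}} \cdot t_{3}^{i_{3}} \cdots w_{n-1}^{j_{n-1}} \cdot t_{n}^{i_{n}},$$ where $0\le i_k\le k-1$ for $2\le k\le n$ and $0\le j_k\le 1$ for $1\le k\le n-1$.
   Context: $D_n$ ($n\ge 2$) is the Coxeter group with generators $s_{1'},s_1,\dots,s_{n-1}$ and relations $s^2=1$ for each generator, $(s_i s_{i+1})^3=1$, $(s_is_j)^2=1$ for $|i-j|\ge 2$ ($1\le i,j\le n-1$), $(s_{1'}s_2)^3=1$, and $(s_{1'}s_i)^2=1$ for $1\le i\le n-1$, $i\ne 2$. For $2\le k\le n$ put $t_k=s_1\cdot s_2\cdots s_{k-1}$, and for $1\le k\le n-1$ put $w_k=s_k\cdot s_{k-1}\cdots s_2\cdot s_1\cdot s_{1'}\cdot s_2\cdots s_k$ (so $w_1=s_1s_{1'}$). *)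

theory Defs
  imports Main
begin

text \<open>Generators of D_n: Gp is s_{1'}, G i is s_i (1 <= i <= n-1).
  Elements of D_n are represented by words over the generators modulo the
  congruence generated by the Coxeter relations.\<close>

datatype gen = Gp | G nat

definition valid_gen :: "nat \<Rightarrow> gen \<Rightarrow> bool" where
  "valid_gen n g = (case g of Gp \<Rightarrow> True | G i \<Rightarrow> 1 \<le> i \<and> i \<le> n - 1)"

definition valid_word :: "nat \<Rightarrow> gen list \<Rightarrow> bool" where
  "valid_word n w = (\<forall>g\<in>set w. valid_gen n g)"

definition wpow :: "gen list \<Rightarrow> nat \<Rightarrow> gen list" where
  "wpow w m = concat (replicate m w)"

definition Dn_rels :: "nat \<Rightarrow> gen list set" where
  "Dn_rels n =
     {[g, g] | g. valid_gen n g}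
   \<union> {wpow [G i, G (i+1)] 3 | i. 1 \<le> i \<and> i + 1 \<le> n - 1}
   \<union> {wpow [G i, G j] 2 | i j. 1 \<le> i \<and> i \<le> n - 1 \<and> 1 \<le> j \<and> j \<le> n - 1
                              \<and> (i + 2 \<le> j \<or> j + 2 \<le> i)}
   \<union> {wpow [Gp, G 2] 3 | u::unit. 2 \<le> n - 1}
   \<union> {wpow [Gp, G i] 2 | i. 1 \<le> i \<and> i \<le> n - 1 \<and> i \<noteq> 2}"

inductive Dn_eq :: "nat \<Rightarrow> gen list \<Rightarrow> gen list \<Rightarrow> bool" for n where
  refl: "Dn_eq n u u"
| sym: "Dn_eq n u v \<Longrightarrow> Dn_eq n v u"
| trans: "Dn_eq n u v \<Longrightarrow> Dn_eq n v x \<Longrightarrow> Dn_eq n u x"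
| ctxt: "Dn_eq n u v \<Longrightarrow> Dn_eq n (a @ u @ b) (a @ v @ b)"
| rel: "r \<in> Dn_rels n \<Longrightarrow> Dn_eq n r []"

definition t_word :: "nat \<Rightarrow> gen list" where
  "t_word k = map G [1..<k]"

definition w_word :: "nat \<Rightarrow> gen list" where
  "w_word k = map G (rev [2..<k+1]) @ [G 1, Gp] @ map G [2..<k+1]"

text \<open>Normal form w_1^{j_1} t_2^{i_2} w_2^{j_2} ... w_{n-1}^{j_{n-1}} t_n^{i_n},
  with ii ! k = i_{k+2} and jj ! k = j_{k+1} for k < n-1.\<close>
definition nf_word :: "nat \<Rightarrow> nat list \<Rightarrow> nat list \<Rightarrow> gen list" where
  "nf_word n ii jj =
     concat (map (\<lambda>k. wpow (w_word (k+1)) (jj ! k) @ wpow (t_word (k+2)) (ii ! k)) [0..<n-1])"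

end

theory Submission
  imports Defs
begin

(*
  D_n acts on the nonzero integers between -n and n by signed permutations: s_i exchanges
  i with i + 1 and -i with -(i + 1), and s_{1'} exchanges 1 with -2 and 2 with -1.  The
  defining relations hold for these maps, so congruent words act alike.

  The words in s_{1'}, s_1, ..., s_{n-2} fix n.  Up to such a word on the left, every word is
  congruent to one of 2n explicit coset representatives, because appending a generator to a
  representative R gives h R' for some such h and some representative R' (braid and
  commutation moves).  The representatives are told apart by the image k or -k of n.  The last
  normal form factor w_{n-1}^j t_n^i sends n to n - i or to i - n, so every representative is
  congruent to h w_{n-1}^j t_n^i, and existence follows by induction on n.  For uniqueness, the
  image of n under a normal form word determines its last factor, which can then be cancelled.
*)

section \<open>Relations of D_n\<close>

declare Dn_eq.trans [trans]

lemma Dn_eq_append: "Dn_eq n u v \<Longrightarrow> Dn_eq n (u @ b) (v @ b)"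
  using Dn_eq.ctxt[of n u v "[]" b] by simp

lemma Dn_eq_prepend: "Dn_eq n u v \<Longrightarrow> Dn_eq n (a @ u) (a @ v)"
  using Dn_eq.ctxt[of n u v a "[]"] by simp

lemma valid_gen_G [simp]: "valid_gen n (G i) \<longleftrightarrow> 1 \<le> i \<and> i \<le> n - 1"
  by (simp add: valid_gen_def)

lemma valid_gen_Gp [simp]: "valid_gen n Gp"
  by (simp add: valid_gen_def)

lemma wpow_0 [simp]: "wpow w 0 = []"
  and wpow_Suc [simp]: "wpow w (Suc m) = w @ wpow w m"
  by (simp_all add: wpow_def)

lemma set_wpow: "set (wpow w m) \<subseteq> set w"
  by (auto simp: wpow_def)

lemma Dn_eq_cancel:
  assumes "valid_gen n g"
  shows "Dn_eq n (a @ [g, g] @ b) (a @ b)"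
proof -
  have "[g, g] \<in> Dn_rels n"
    using assms by (auto simp: Dn_rels_def)
  then have "Dn_eq n [g, g] []"
    by (rule Dn_eq.rel)
  from Dn_eq.ctxt[OF this, of a b] show ?thesis
    by simp
qed

lemma Dn_eq_rev_inverse: "valid_word n v \<Longrightarrow> Dn_eq n (v @ rev v) []"
proof (induction v)
  case Nil
  show ?case by (simp add: Dn_eq.refl)
next
  case (Cons g v)
  then have "valid_gen n g" "valid_word n v"
    by (auto simp: valid_word_def)
  have "(g # v) @ rev (g # v) = [g] @ (v @ rev v) @ [g]"
    by simp
  also have "Dn_eq n \<dots> ([] @ [g, g] @ [])"
    using Dn_eq.ctxt[OF Cons.IH[OF \<open>valid_word n v\<close>], of "[g]" "[g]"] by simp
  also have "Dn_eq n \<dots> []"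
    using Dn_eq_cancel[OF \<open>valid_gen n g\<close>, of "[]" "[]"] by simp
  finally show ?case .
qed

lemma Dn_eq_of_relator:
  assumes "valid_word n v" "Dn_eq n (u @ rev v) []"
  shows "Dn_eq n u v"
proof -
  have "Dn_eq n (rev v @ v) []"
    using Dn_eq_rev_inverse[of n "rev v"] assms(1) by (simp add: valid_word_def)
  then have "Dn_eq n u (u @ rev v @ v)"
    using Dn_eq_prepend[of n "rev v @ v" "[]" u] by (simp add: Dn_eq.sym)
  also have "Dn_eq n \<dots> v"
    using Dn_eq_append[OF assms(2), of v] by simp
  finally show ?thesis .
qed

lemma Dn_eq_commute:
  assumes "1 \<le> i" "i \<le> n - 1" "1 \<le> j" "j \<le> n - 1" "i + 2 \<le> j \<or> j + 2 \<le> i"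
  shows "Dn_eq n [G i, G j] [G j, G i]"
proof (rule Dn_eq_of_relator)
  have "wpow [G i, G j] 2 \<in> Dn_rels n"
    unfolding Dn_rels_def by (rule UnI1, rule UnI1, rule UnI2) (use assms in blast)
  then show "Dn_eq n ([G i, G j] @ rev [G j, G i]) []"
    by (auto intro: Dn_eq.rel simp: numeral_2_eq_2)
qed (use assms in \<open>simp add: valid_word_def\<close>)

lemma Dn_eq_braid:
  assumes "1 \<le> i" "i + 1 \<le> n - 1"
  shows "Dn_eq n [G i, G (i + 1), G i] [G (i + 1), G i, G (i + 1)]"
proof (rule Dn_eq_of_relator)
  have "wpow [G i, G (i + 1)] 3 \<in> Dn_rels n"
    unfolding Dn_rels_def by (rule UnI1, rule UnI1, rule UnI1, rule UnI2) (use assms in blast)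
  then show "Dn_eq n ([G i, G (i + 1), G i] @ rev [G (i + 1), G i, G (i + 1)]) []"
    by (auto intro: Dn_eq.rel simp: numeral_3_eq_3)
qed (use assms in \<open>simp add: valid_word_def\<close>)

lemma Dn_eq_commute_Gp:
  assumes "1 \<le> i" "i \<le> n - 1" "i \<noteq> 2"
  shows "Dn_eq n [Gp, G i] [G i, Gp]"
proof (rule Dn_eq_of_relator)
  have "wpow [Gp, G i] 2 \<in> Dn_rels n"
    unfolding Dn_rels_def by (rule UnI2) (use assms in blast)
  then show "Dn_eq n ([Gp, G i] @ rev [G i, Gp]) []"
    by (auto intro: Dn_eq.rel simp: numeral_2_eq_2)
qed (use assms in \<open>simp add: valid_word_def\<close>)

lemma Dn_eq_braid_Gp:
  assumes "3 \<le> n"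
  shows "Dn_eq n [Gp, G 2, Gp] [G 2, Gp, G 2]"
proof (rule Dn_eq_of_relator)
  have "wpow [Gp, G 2] 3 \<in> Dn_rels n"
    unfolding Dn_rels_def by (rule UnI1, rule UnI2) (use assms in auto)
  then show "Dn_eq n ([Gp, G 2, Gp] @ rev [G 2, Gp, G 2]) []"
    by (auto intro: Dn_eq.rel simp: numeral_3_eq_3)
qed (use assms in \<open>simp add: valid_word_def\<close>)

lemma Dn_eq_commute_word:
  "(\<And>x. x \<in> set u \<Longrightarrow> Dn_eq n [g, x] [x, g]) \<Longrightarrow> Dn_eq n (u @ [g]) ([g] @ u)"
proof (induction u)
  case Nil
  show ?case by (simp add: Dn_eq.refl)
next
  case (Cons x u)
  then have IH: "Dn_eq n (u @ [g]) ([g] @ u)"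
    by simp
  have "(x # u) @ [g] = [x] @ (u @ [g])"
    by simp
  also have "Dn_eq n \<dots> ([x] @ ([g] @ u))"
    using IH by (rule Dn_eq_prepend)
  also have "\<dots> = [x, g] @ u"
    by simp
  also have "Dn_eq n \<dots> ([g, x] @ u)"
    using Cons.prems by (intro Dn_eq_append) (rule Dn_eq.sym, simp)
  finally show ?case
    by simp
qed

definition up_word :: "nat \<Rightarrow> nat \<Rightarrow> gen list" where
  "up_word a b = map G [a..<b]"

definition down_word :: "nat \<Rightarrow> nat \<Rightarrow> gen list" where
  "down_word a b = map G (rev [a..<b])"

lemma up_word_empty [simp]: "up_word a a = []"
  and down_word_empty [simp]: "down_word a a = []"
  and set_up_word [simp]: "set (up_word a b) = G ` {a..<b}"
  and set_down_word [simp]: "set (down_word a b) = G ` {a..<b}"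
  by (simp_all add: up_word_def down_word_def)

lemma up_word_snoc: "a \<le> b \<Longrightarrow> up_word a (Suc b) = up_word a b @ [G b]"
  and up_word_Cons: "a < b \<Longrightarrow> up_word a b = G a # up_word (Suc a) b"
  and down_word_snoc: "a < b \<Longrightarrow> down_word a b = down_word (Suc a) b @ [G a]"
  and down_word_Cons: "a \<le> b \<Longrightarrow> down_word a (Suc b) = G b # down_word a b"
  by (simp_all add: up_word_def down_word_def upt_conv_Cons)

lemma up_word_append: "a \<le> c \<Longrightarrow> c \<le> b \<Longrightarrow> up_word a b = up_word a c @ up_word c b"
  and down_word_append: "a \<le> c \<Longrightarrow> c \<le> b \<Longrightarrow> down_word a b = down_word c b @ down_word a c"
  using upt_add_eq_append[of a c "b - c"] by (simp_all add: up_word_def down_word_def)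

lemma t_word_eq_up_word: "t_word n = up_word 1 n"
  by (simp add: t_word_def up_word_def)

lemma w_word_eq: "2 \<le> n \<Longrightarrow> w_word (n - 1) = down_word 2 n @ [G 1, Gp] @ up_word 2 n"
  by (simp add: w_word_def down_word_def up_word_def)

lemma down_word_conj_G:
  assumes "1 \<le> a" "a \<le> i" "Suc i < b" "b \<le> n"
  shows "Dn_eq n (down_word a b @ [G (Suc i)]) ([G i] @ down_word a b)"
proof -
  have d: "down_word a b = down_word (i + 2) b @ [G (Suc i), G i] @ down_word a i"
    using assms down_word_append[of a "i + 2" b] by (simp add: down_word_Cons)
  have "down_word a b @ [G (Suc i)]
      = down_word (i + 2) b @ [G (Suc i), G i] @ (down_word a i @ [G (Suc i)])"
    using d by simp
  also have "Dn_eq n \<dots> (down_word (i + 2) b @ [G (Suc i), G i] @ ([G (Suc i)] @ down_word a i))"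
    by (intro Dn_eq_prepend Dn_eq_commute_word) (use assms in \<open>auto intro!: Dn_eq_commute\<close>)
  also have "\<dots> = down_word (i + 2) b @ [G (Suc i), G i, G (Suc i)] @ down_word a i"
    by simp
  also have "Dn_eq n \<dots> (down_word (i + 2) b @ [G i, G (Suc i), G i] @ down_word a i)"
    by (rule Dn_eq.ctxt) (rule Dn_eq.sym, use Dn_eq_braid[of i n] assms in simp)
  also have "\<dots> = (down_word (i + 2) b @ [G i]) @ [G (Suc i), G i] @ down_word a i"
    by simp
  also have "Dn_eq n \<dots> (([G i] @ down_word (i + 2) b) @ [G (Suc i), G i] @ down_word a i)"
    by (intro Dn_eq_append Dn_eq_commute_word) (use assms in \<open>auto intro!: Dn_eq_commute\<close>)
  also have "\<dots> = [G i] @ down_word a b"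
    using d by simp
  finally show ?thesis .
qed

lemma up_word_conj_G:
  assumes "1 \<le> a" "a \<le> j" "Suc j < b" "b \<le> n"
  shows "Dn_eq n (up_word a b @ [G j]) ([G (Suc j)] @ up_word a b)"
proof -
  have u: "up_word a b = up_word a j @ [G j, G (Suc j)] @ up_word (j + 2) b"
    using assms up_word_append[of a j b] by (simp add: up_word_Cons)
  have "up_word a b @ [G j] = up_word a j @ [G j, G (Suc j)] @ (up_word (j + 2) b @ [G j])"
    using u by simp
  also have "Dn_eq n \<dots> (up_word a j @ [G j, G (Suc j)] @ ([G j] @ up_word (j + 2) b))"
    by (intro Dn_eq_prepend Dn_eq_commute_word) (use assms in \<open>auto intro!: Dn_eq_commute\<close>)
  also have "\<dots> = up_word a j @ [G j, G (Suc j), G j] @ up_word (j + 2) b"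
    by simp
  also have "Dn_eq n \<dots> (up_word a j @ [G (Suc j), G j, G (Suc j)] @ up_word (j + 2) b)"
    by (rule Dn_eq.ctxt) (use Dn_eq_braid[of j n] assms in simp)
  also have "\<dots> = (up_word a j @ [G (Suc j)]) @ [G j, G (Suc j)] @ up_word (j + 2) b"
    by simp
  also have "Dn_eq n \<dots> (([G (Suc j)] @ up_word a j) @ [G j, G (Suc j)] @ up_word (j + 2) b)"
    by (intro Dn_eq_append Dn_eq_commute_word) (use assms in \<open>auto intro!: Dn_eq_commute\<close>)
  also have "\<dots> = [G (Suc j)] @ up_word a b"
    using u by simp
  finally show ?thesis .
qed

section \<open>Cosets of the stabiliser of n\<close>

(* Right coset representatives: pos_rep n k sends n to k and neg_rep n k sends n to -k. *)

definition pos_rep :: "nat \<Rightarrow> nat \<Rightarrow> gen list" where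
  "pos_rep n k = down_word k n"

definition neg_rep :: "nat \<Rightarrow> nat \<Rightarrow> gen list" where
  "neg_rep n k = (if k = 1 then down_word 2 n @ [Gp] else down_word 1 n @ [Gp] @ up_word 2 k)"

definition coset_rep :: "nat \<Rightarrow> gen list \<Rightarrow> bool" where
  "coset_rep n R \<longleftrightarrow> (\<exists>k. 1 \<le> k \<and> k \<le> n \<and> (R = pos_rep n k \<or> R = neg_rep n k))"

(* Words in s_{1'}, s_1, ..., s_{n-2}, the generators of the stabiliser of n; for n = 2 the
   stabiliser is trivial. *)
definition parabolic_word :: "nat \<Rightarrow> gen list \<Rightarrow> bool" where
  "parabolic_word n h \<longleftrightarrow> (\<forall>g\<in>set h. g = Gp \<and> 3 \<le> n \<or> (\<exists>i. g = G i \<and> 1 \<le> i \<and> i + 2 \<le> n))"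

definition coset_decomp :: "nat \<Rightarrow> gen list \<Rightarrow> bool" where
  "coset_decomp n w \<longleftrightarrow> (\<exists>h R. parabolic_word n h \<and> coset_rep n R \<and> Dn_eq n w (h @ R))"

lemma coset_rep_pos_rep: "1 \<le> k \<Longrightarrow> k \<le> n \<Longrightarrow> coset_rep n (pos_rep n k)"
  and coset_rep_neg_rep: "1 \<le> k \<Longrightarrow> k \<le> n \<Longrightarrow> coset_rep n (neg_rep n k)"
  unfolding coset_rep_def by blast+

lemma parabolic_word_Nil [simp]: "parabolic_word n []"
  and parabolic_word_G [simp]: "parabolic_word n [G i] \<longleftrightarrow> 1 \<le> i \<and> i + 2 \<le> n"
  and parabolic_word_Gp [simp]: "parabolic_word n [Gp] \<longleftrightarrow> 3 \<le> n"
  and parabolic_word_append [simp]: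
    "parabolic_word n (u @ v) \<longleftrightarrow> parabolic_word n u \<and> parabolic_word n v"
  and parabolic_word_rev [simp]: "parabolic_word n (rev u) \<longleftrightarrow> parabolic_word n u"
  by (auto simp: parabolic_word_def)

lemma coset_decompI:
  "Dn_eq n w (h @ R) \<Longrightarrow> parabolic_word n h \<Longrightarrow> coset_rep n R \<Longrightarrow> coset_decomp n w"
  unfolding coset_decomp_def by blast

lemma coset_decomp_pos_rep_G:
  assumes "1 \<le> k" "k \<le> n" "1 \<le> j" "j \<le> n - 1"
  shows "coset_decomp n (pos_rep n k @ [G j])"
proof -
  consider "Suc j < k" | "Suc j = k" | "j = k" | "k < j"
    by linarith
  then show ?thesis
  proof cases
    case 1
    have "Dn_eq n (pos_rep n k @ [G j]) ([G j] @ pos_rep n k)"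
      unfolding pos_rep_def
      by (rule Dn_eq_commute_word) (use assms 1 in \<open>auto intro!: Dn_eq_commute\<close>)
    then show ?thesis
      by (rule coset_decompI) (use assms 1 in \<open>auto intro: coset_rep_pos_rep\<close>)
  next
    case 2
    have "pos_rep n k @ [G j] = [] @ pos_rep n j"
      using assms 2 by (simp add: pos_rep_def down_word_snoc)
    then have "Dn_eq n (pos_rep n k @ [G j]) ([] @ pos_rep n j)"
      by (simp add: Dn_eq.refl)
    then show ?thesis
      by (rule coset_decompI) (use assms 2 in \<open>auto intro: coset_rep_pos_rep\<close>)
  next
    case 3
    have "pos_rep n k @ [G j] = down_word (Suc k) n @ [G k, G k] @ []"
      using assms 3 by (simp add: pos_rep_def down_word_snoc)
    also have "Dn_eq n \<dots> (down_word (Suc k) n @ [])"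
      by (rule Dn_eq_cancel) (use assms 3 in simp)
    also have "\<dots> = [] @ pos_rep n (Suc k)"
      by (simp add: pos_rep_def)
    finally show ?thesis
      by (rule coset_decompI) (use assms 3 in \<open>auto intro: coset_rep_pos_rep\<close>)
  next
    case 4
    then obtain i where "j = Suc i" "k \<le> i"
      by (cases j) auto
    have "Dn_eq n (pos_rep n k @ [G j]) ([G i] @ pos_rep n k)"
      unfolding pos_rep_def \<open>j = Suc i\<close>
      by (rule down_word_conj_G) (use assms \<open>j = Suc i\<close> \<open>k \<le> i\<close> in auto)
    then show ?thesis
      by (rule coset_decompI) (use assms \<open>k \<le> i\<close> \<open>j = Suc i\<close> in \<open>auto intro: coset_rep_pos_rep\<close>)
  qed
qed

lemma neg_rep_1: "neg_rep n (Suc 0) = down_word 2 n @ [Gp]"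
  and neg_rep_ge_2: "2 \<le> k \<Longrightarrow> neg_rep n k = down_word 1 n @ [Gp] @ up_word 2 k"
  by (simp_all add: neg_rep_def)

lemma coset_decomp_pos_rep_Gp:
  assumes "2 \<le> n" "1 \<le> k" "k \<le> n"
  shows "coset_decomp n (pos_rep n k @ [Gp])"
proof -
  consider "3 \<le> k" | "k = 2" | "k = 1"
    using assms by linarith
  then show ?thesis
  proof cases
    case 1
    have "Dn_eq n (pos_rep n k @ [Gp]) ([Gp] @ pos_rep n k)"
      unfolding pos_rep_def
      by (rule Dn_eq_commute_word) (use assms 1 in \<open>auto intro!: Dn_eq_commute_Gp\<close>)
    then show ?thesis
      by (rule coset_decompI) (use assms 1 in \<open>auto intro: coset_rep_pos_rep\<close>)
  next
    case 2
    then have "Dn_eq n (pos_rep n k @ [Gp]) ([] @ neg_rep n 1)"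
      by (simp add: pos_rep_def neg_rep_1 Dn_eq.refl)
    then show ?thesis
      by (rule coset_decompI) (use assms in \<open>auto intro: coset_rep_neg_rep\<close>)
  next
    case 3
    then have "Dn_eq n (pos_rep n k @ [Gp]) ([] @ neg_rep n 2)"
      by (simp add: pos_rep_def neg_rep_ge_2 Dn_eq.refl)
    then show ?thesis
      by (rule coset_decompI) (use assms in \<open>auto intro: coset_rep_neg_rep\<close>)
  qed
qed

lemma coset_decomp_neg_rep_1:
  assumes "2 \<le> n" "valid_gen n g"
  shows "coset_decomp n (neg_rep n 1 @ [g])"
proof (cases g)
  case Gp
  have "neg_rep n 1 @ [g] = down_word 2 n @ [Gp, Gp] @ []"
    using Gp by (simp add: neg_rep_1)
  also have "Dn_eq n \<dots> (down_word 2 n @ [])"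
    by (rule Dn_eq_cancel) simp
  also have "\<dots> = [] @ pos_rep n 2"
    by (simp add: pos_rep_def)
  finally show ?thesis
    by (rule coset_decompI) (use assms in \<open>auto intro: coset_rep_pos_rep\<close>)
next
  case (G j)
  then have j: "1 \<le> j" "j \<le> n - 1"
    using assms by auto
  consider "3 \<le> j" | "j = 2" | "j = 1"
    using j by linarith
  then show ?thesis
  proof cases
    case 1
    then obtain i where i: "j = Suc i" "2 \<le> i"
      by (cases j) auto
    have "neg_rep n 1 @ [g] = down_word 2 n @ [Gp, G j] @ []"
      using G by (simp add: neg_rep_1)
    also have "Dn_eq n \<dots> (down_word 2 n @ [G j, Gp] @ [])"
      by (rule Dn_eq.ctxt, rule Dn_eq_commute_Gp) (use j 1 in auto)
    also have "\<dots> = (down_word 2 n @ [G (Suc i)]) @ [Gp]"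
      using i by simp
    also have "Dn_eq n \<dots> (([G i] @ down_word 2 n) @ [Gp])"
      by (rule Dn_eq_append, rule down_word_conj_G) (use i j in auto)
    also have "\<dots> = [G i] @ neg_rep n 1"
      by (simp add: neg_rep_1)
    finally show ?thesis
      by (rule coset_decompI) (use i j in \<open>auto intro: coset_rep_neg_rep\<close>)
  next
    case 2
    then have "3 \<le> n"
      using j by simp
    then have d: "down_word 2 n = down_word 3 n @ [G 2]"
      using down_word_snoc[of 2 n] by (simp add: numeral_3_eq_3 numeral_2_eq_2)
    have "neg_rep n 1 @ [g] = down_word 3 n @ [G 2, Gp, G 2] @ []"
      using G 2 d by (simp add: neg_rep_1)
    also have "Dn_eq n \<dots> (down_word 3 n @ [Gp, G 2, Gp] @ [])"
      by (rule Dn_eq.ctxt, rule Dn_eq.sym, rule Dn_eq_braid_Gp) (use \<open>3 \<le> n\<close> in simp)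
    also have "\<dots> = (down_word 3 n @ [Gp]) @ [G 2, Gp]"
      by simp
    also have "Dn_eq n \<dots> (([Gp] @ down_word 3 n) @ [G 2, Gp])"
      by (rule Dn_eq_append, rule Dn_eq_commute_word) (auto intro!: Dn_eq_commute_Gp)
    also have "\<dots> = [Gp] @ neg_rep n 1"
      using d by (simp add: neg_rep_1)
    finally show ?thesis
      by (rule coset_decompI) (use \<open>3 \<le> n\<close> in \<open>auto intro: coset_rep_neg_rep\<close>)
  next
    case 3
    have "neg_rep n 1 @ [g] = down_word 2 n @ [Gp, G 1] @ []"
      using G 3 by (simp add: neg_rep_1)
    also have "Dn_eq n \<dots> (down_word 2 n @ [G 1, Gp] @ [])"
      by (rule Dn_eq.ctxt, rule Dn_eq_commute_Gp) (use assms in auto)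
    also have "\<dots> = [] @ neg_rep n 2"
      using assms down_word_snoc[of 1 n] by (simp add: neg_rep_ge_2 numeral_2_eq_2)
    finally show ?thesis
      by (rule coset_decompI) (use assms in \<open>auto intro: coset_rep_neg_rep\<close>)
  qed
qed

lemma Dn_eq_conj_G1_Gp:
  assumes "3 \<le> n"
  shows "Dn_eq n [G 2, G 1, Gp, G 2, G 1] [Gp, G 2, G 1, Gp, G 2]"
proof -
  have "[G 2, G 1, Gp, G 2, G 1] = [G 2] @ [G 1, Gp] @ [G 2, G 1]"
    by simp
  also have "Dn_eq n \<dots> ([G 2] @ [Gp, G 1] @ [G 2, G 1])"
    by (rule Dn_eq.ctxt, rule Dn_eq.sym, rule Dn_eq_commute_Gp) (use assms in auto)
  also have "\<dots> = [G 2, Gp] @ [G 1, G 2, G 1] @ []"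
    by simp
  also have "Dn_eq n \<dots> ([G 2, Gp] @ [G 2, G 1, G 2] @ [])"
    by (rule Dn_eq.ctxt) (use Dn_eq_braid[of 1 n] assms in \<open>simp add: numeral_2_eq_2\<close>)
  also have "\<dots> = [] @ [G 2, Gp, G 2] @ [G 1, G 2]"
    by simp
  also have "Dn_eq n \<dots> ([] @ [Gp, G 2, Gp] @ [G 1, G 2])"
    by (rule Dn_eq.ctxt, rule Dn_eq.sym, rule Dn_eq_braid_Gp) (use assms in simp)
  also have "\<dots> = [Gp, G 2] @ [Gp, G 1] @ [G 2]"
    by simp
  also have "Dn_eq n \<dots> ([Gp, G 2] @ [G 1, Gp] @ [G 2])"
    by (rule Dn_eq.ctxt, rule Dn_eq_commute_Gp) (use assms in auto)
  finally show ?thesis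
    by simp
qed

lemma coset_decomp_neg_rep_Gp:
  assumes "2 \<le> k" "k \<le> n"
  shows "coset_decomp n (neg_rep n k @ [Gp])"
proof (cases "k = 2")
  case True
  have "neg_rep n k @ [Gp] = down_word 1 n @ [Gp, Gp] @ []"
    using True by (simp add: neg_rep_ge_2)
  also have "Dn_eq n \<dots> (down_word 1 n @ [])"
    by (rule Dn_eq_cancel) simp
  also have "\<dots> = [] @ pos_rep n 1"
    by (simp add: pos_rep_def)
  finally show ?thesis
    by (rule coset_decompI) (use assms in \<open>auto intro: coset_rep_pos_rep\<close>)
next
  case False
  then have "3 \<le> k" "3 \<le> n"
    using assms by auto
  have u: "up_word 2 k = G 2 # up_word 3 k"
    using \<open>3 \<le> k\<close> up_word_Cons[of 2 k] by (simp add: numeral_3_eq_3)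
  have d: "down_word 1 n = down_word 3 n @ [G 2, G 1]"
    using \<open>3 \<le> n\<close> down_word_snoc[of 1 n] down_word_snoc[of 2 n]
    by (simp add: numeral_3_eq_3 numeral_2_eq_2)
  have "neg_rep n k @ [Gp] = down_word 1 n @ [Gp, G 2] @ (up_word 3 k @ [Gp])"
    using assms u by (simp add: neg_rep_ge_2)
  also have "Dn_eq n \<dots> (down_word 1 n @ [Gp, G 2] @ ([Gp] @ up_word 3 k))"
    by (intro Dn_eq_prepend Dn_eq_commute_word) (use assms in \<open>auto intro!: Dn_eq_commute_Gp\<close>)
  also have "\<dots> = down_word 1 n @ [Gp, G 2, Gp] @ up_word 3 k"
    by simp
  also have "Dn_eq n \<dots> (down_word 1 n @ [G 2, Gp, G 2] @ up_word 3 k)"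
    by (rule Dn_eq.ctxt, rule Dn_eq_braid_Gp) (use \<open>3 \<le> n\<close> in simp)
  also have "\<dots> = down_word 3 n @ [G 2, G 1, G 2] @ ([Gp, G 2] @ up_word 3 k)"
    using d by simp
  also have "Dn_eq n \<dots> (down_word 3 n @ [G 1, G 2, G 1] @ ([Gp, G 2] @ up_word 3 k))"
    by (rule Dn_eq.ctxt, rule Dn_eq.sym)
      (use Dn_eq_braid[of 1 n] \<open>3 \<le> n\<close> in \<open>simp add: numeral_2_eq_2\<close>)
  also have "\<dots> = (down_word 3 n @ [G 1]) @ [G 2, G 1, Gp, G 2] @ up_word 3 k"
    by simp
  also have "Dn_eq n \<dots> (([G 1] @ down_word 3 n) @ [G 2, G 1, Gp, G 2] @ up_word 3 k)"
    by (rule Dn_eq_append, rule Dn_eq_commute_word) (use assms in \<open>auto intro!: Dn_eq_commute\<close>)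
  also have "\<dots> = [G 1] @ neg_rep n k"
    using d u assms by (simp add: neg_rep_ge_2)
  finally show ?thesis
    by (rule coset_decompI) (use assms \<open>3 \<le> n\<close> in \<open>auto intro: coset_rep_neg_rep\<close>)
qed

lemma coset_decomp_neg_rep_G1:
  assumes "2 \<le> n" "2 \<le> k" "k \<le> n"
  shows "coset_decomp n (neg_rep n k @ [G 1])"
proof (cases "k = 2")
  case True
  have "neg_rep n k @ [G 1] = down_word 1 n @ [Gp, G 1] @ []"
    using True by (simp add: neg_rep_ge_2)
  also have "Dn_eq n \<dots> (down_word 1 n @ [G 1, Gp] @ [])"
    by (rule Dn_eq.ctxt, rule Dn_eq_commute_Gp) (use assms in auto)
  also have "\<dots> = down_word 2 n @ [G 1, G 1] @ [Gp]"
    using assms down_word_snoc[of 1 n] by (simp add: numeral_2_eq_2)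
  also have "Dn_eq n \<dots> (down_word 2 n @ [Gp])"
    by (rule Dn_eq_cancel) (use assms in simp)
  also have "\<dots> = [] @ neg_rep n 1"
    by (simp add: neg_rep_1)
  finally show ?thesis
    by (rule coset_decompI) (use assms in \<open>auto intro: coset_rep_neg_rep\<close>)
next
  case False
  then have "3 \<le> k" "3 \<le> n"
    using assms by auto
  have u: "up_word 2 k = G 2 # up_word 3 k"
    using \<open>3 \<le> k\<close> up_word_Cons[of 2 k] by (simp add: numeral_3_eq_3)
  have d: "down_word 1 n = down_word 3 n @ [G 2, G 1]"
    using \<open>3 \<le> n\<close> down_word_snoc[of 1 n] down_word_snoc[of 2 n]
    by (simp add: numeral_3_eq_3 numeral_2_eq_2)
  have "neg_rep n k @ [G 1] = down_word 1 n @ [Gp, G 2] @ (up_word 3 k @ [G 1])"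
    using assms u by (simp add: neg_rep_ge_2)
  also have "Dn_eq n \<dots> (down_word 1 n @ [Gp, G 2] @ ([G 1] @ up_word 3 k))"
    by (intro Dn_eq_prepend Dn_eq_commute_word) (use assms in \<open>auto intro!: Dn_eq_commute\<close>)
  also have "\<dots> = down_word 3 n @ [G 2, G 1, Gp, G 2, G 1] @ up_word 3 k"
    using d by simp
  also have "Dn_eq n \<dots> (down_word 3 n @ [Gp, G 2, G 1, Gp, G 2] @ up_word 3 k)"
    by (rule Dn_eq.ctxt, rule Dn_eq_conj_G1_Gp[OF \<open>3 \<le> n\<close>])
  also have "\<dots> = (down_word 3 n @ [Gp]) @ [G 2, G 1, Gp, G 2] @ up_word 3 k"
    by simp
  also have "Dn_eq n \<dots> (([Gp] @ down_word 3 n) @ [G 2, G 1, Gp, G 2] @ up_word 3 k)"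
    by (rule Dn_eq_append, rule Dn_eq_commute_word) (use assms in \<open>auto intro!: Dn_eq_commute_Gp\<close>)
  also have "\<dots> = [Gp] @ neg_rep n k"
    using d u assms by (simp add: neg_rep_ge_2)
  finally show ?thesis
    by (rule coset_decompI) (use assms \<open>3 \<le> n\<close> in \<open>auto intro: coset_rep_neg_rep\<close>)
qed

lemma coset_decomp_neg_rep_G:
  assumes "2 \<le> k" "k \<le> n" "2 \<le> j" "j \<le> n - 1"
  shows "coset_decomp n (neg_rep n k @ [G j])"
proof -
  consider "k < j" | "j = k" | "Suc j = k" | "j + 2 \<le> k"
    by linarith
  then show ?thesis
  proof cases
    case 1
    then obtain i where i: "j = Suc i" "k \<le> i"
      by (cases j) auto
    have "neg_rep n k @ [G j] = down_word 1 n @ [Gp] @ (up_word 2 k @ [G j])"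
      using assms by (simp add: neg_rep_ge_2)
    also have "Dn_eq n \<dots> (down_word 1 n @ [Gp] @ ([G j] @ up_word 2 k))"
      by (intro Dn_eq_prepend Dn_eq_commute_word) (use assms 1 in \<open>auto intro!: Dn_eq_commute\<close>)
    also have "\<dots> = down_word 1 n @ [Gp, G j] @ up_word 2 k"
      by simp
    also have "Dn_eq n \<dots> (down_word 1 n @ [G j, Gp] @ up_word 2 k)"
      by (rule Dn_eq.ctxt, rule Dn_eq_commute_Gp) (use assms 1 in auto)
    also have "\<dots> = (down_word 1 n @ [G (Suc i)]) @ [Gp] @ up_word 2 k"
      using i by simp
    also have "Dn_eq n \<dots> (([G i] @ down_word 1 n) @ [Gp] @ up_word 2 k)"
      by (rule Dn_eq_append, rule down_word_conj_G) (use assms i in auto)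
    also have "\<dots> = [G i] @ neg_rep n k"
      using assms by (simp add: neg_rep_ge_2)
    finally show ?thesis
      by (rule coset_decompI) (use assms i in \<open>auto intro: coset_rep_neg_rep\<close>)
  next
    case 2
    then have "Dn_eq n (neg_rep n k @ [G j]) ([] @ neg_rep n (Suc k))"
      using assms by (simp add: neg_rep_ge_2 up_word_snoc Dn_eq.refl)
    then show ?thesis
      by (rule coset_decompI) (use assms 2 in \<open>auto intro: coset_rep_neg_rep\<close>)
  next
    case 3
    have "neg_rep n k @ [G j] = (down_word 1 n @ [Gp] @ up_word 2 j) @ [G j, G j] @ []"
      using assms 3 up_word_snoc[of 2 j] by (simp add: neg_rep_ge_2)
    also have "Dn_eq n \<dots> ((down_word 1 n @ [Gp] @ up_word 2 j) @ [])"
      by (rule Dn_eq_cancel) (use assms in simp)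
    also have "\<dots> = [] @ neg_rep n j"
      using assms by (simp add: neg_rep_ge_2)
    finally show ?thesis
      by (rule coset_decompI) (use assms 3 in \<open>auto intro: coset_rep_neg_rep\<close>)
  next
    case 4
    have "neg_rep n k @ [G j] = down_word 1 n @ [Gp] @ (up_word 2 k @ [G j])"
      using assms by (simp add: neg_rep_ge_2)
    also have "Dn_eq n \<dots> (down_word 1 n @ [Gp] @ ([G (Suc j)] @ up_word 2 k))"
      by (intro Dn_eq_prepend up_word_conj_G) (use assms 4 in auto)
    also have "\<dots> = down_word 1 n @ [Gp, G (Suc j)] @ up_word 2 k"
      by simp
    also have "Dn_eq n \<dots> (down_word 1 n @ [G (Suc j), Gp] @ up_word 2 k)"
      by (rule Dn_eq.ctxt, rule Dn_eq_commute_Gp) (use assms 4 in auto)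
    also have "\<dots> = (down_word 1 n @ [G (Suc j)]) @ [Gp] @ up_word 2 k"
      by simp
    also have "Dn_eq n \<dots> (([G j] @ down_word 1 n) @ [Gp] @ up_word 2 k)"
      by (rule Dn_eq_append, rule down_word_conj_G) (use assms 4 in auto)
    also have "\<dots> = [G j] @ neg_rep n k"
      using assms by (simp add: neg_rep_ge_2)
    finally show ?thesis
      by (rule coset_decompI) (use assms 4 in \<open>auto intro: coset_rep_neg_rep\<close>)
  qed
qed

lemma coset_decomp_coset_rep_snoc:
  assumes "2 \<le> n" "coset_rep n R" "valid_gen n g"
  shows "coset_decomp n (R @ [g])"
proof -
  obtain k where k: "1 \<le> k" "k \<le> n" and R: "R = pos_rep n k \<or> R = neg_rep n k"
    using assms(2) unfolding coset_rep_def by blast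
  show ?thesis
  proof (cases g)
    case Gp
    then show ?thesis
      using R k assms coset_decomp_pos_rep_Gp coset_decomp_neg_rep_1 coset_decomp_neg_rep_Gp
      by (cases "k = 1") auto
  next
    case (G j)
    then have j: "1 \<le> j" "j \<le> n - 1"
      using assms(3) by auto
    consider "R = pos_rep n k" | "R = neg_rep n k" "k = 1" | "R = neg_rep n k" "2 \<le> k" "j = 1"
      | "R = neg_rep n k" "2 \<le> k" "2 \<le> j"
      using R k j by linarith
    then show ?thesis
      by cases
        (use G k j assms coset_decomp_pos_rep_G coset_decomp_neg_rep_1 coset_decomp_neg_rep_G1
          coset_decomp_neg_rep_G in auto)
  qed
qed

lemma coset_decomp_valid_word:
  assumes "2 \<le> n"
  shows "valid_word n w \<Longrightarrow> coset_decomp n w"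
proof (induction w rule: rev_induct)
  case Nil
  have "Dn_eq n [] ([] @ pos_rep n n)"
    by (simp add: pos_rep_def Dn_eq.refl)
  then show ?case
    by (rule coset_decompI) (use assms in \<open>auto intro: coset_rep_pos_rep\<close>)
next
  case (snoc g w)
  then have "valid_gen n g" "coset_decomp n w"
    by (auto simp: valid_word_def)
  then obtain h R where hR: "parabolic_word n h" "coset_rep n R" "Dn_eq n w (h @ R)"
    unfolding coset_decomp_def by blast
  obtain h' R' where hR': "parabolic_word n h'" "coset_rep n R'" "Dn_eq n (R @ [g]) (h' @ R')"
    using coset_decomp_coset_rep_snoc[OF assms hR(2) \<open>valid_gen n g\<close>]
    unfolding coset_decomp_def by blast
  have "Dn_eq n (w @ [g]) (h @ (R @ [g]))"
    using Dn_eq_append[OF hR(3), of "[g]"] by simp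
  also have "Dn_eq n \<dots> ((h @ h') @ R')"
    using Dn_eq_prepend[OF hR'(3), of h] by simp
  finally show ?case
    by (rule coset_decompI) (use hR hR' in simp_all)
qed

section \<open>The signed permutation action\<close>

(* G 0 is not a generator; letting it act trivially keeps every gen_action an involution. *)
fun gen_action :: "gen \<Rightarrow> int \<Rightarrow> int" where
  "gen_action Gp x =
     (if x = 1 then -2 else if x = 2 then -1 else if x = -1 then 2 else if x = -2 then 1 else x)"
| "gen_action (G i) x =
     (if i = 0 then x
      else if x = int i then int i + 1 else if x = int i + 1 then int i
      else if x = - int i then - int i - 1 else if x = - int i - 1 then - int i else x)"

abbreviation word_action :: "gen list \<Rightarrow> int \<Rightarrow> int" where
  "word_action w \<equiv> fold gen_action w"

definition gen_support :: "gen \<Rightarrow> int set" where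
  "gen_support g = (case g of
      Gp \<Rightarrow> {x. \<bar>x\<bar> = 1 \<or> \<bar>x\<bar> = 2}
    | G i \<Rightarrow> {x. \<bar>x\<bar> = int i \<or> \<bar>x\<bar> = int i + 1})"

lemma gen_action_involutive [simp]: "gen_action g (gen_action g x) = x"
  by (cases g) auto

lemma gen_action_outside_support: "x \<notin> gen_support g \<Longrightarrow> gen_action g x = x"
  by (cases g) (auto simp: gen_support_def)

lemma gen_action_in_support: "x \<in> gen_support g \<Longrightarrow> gen_action g x \<in> gen_support g"
  by (cases g) (auto simp: gen_support_def)

lemma gen_action_commute_disjoint:
  assumes "gen_support a \<inter> gen_support b = {}"
  shows "gen_action a (gen_action b x) = gen_action b (gen_action a x)"
proof (cases "x \<in> gen_support a")
  case True
  then have "x \<notin> gen_support b" "gen_action a x \<notin> gen_support b"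
    using assms gen_action_in_support[OF True] by auto
  then show ?thesis
    by (simp add: gen_action_outside_support)
next
  case False
  show ?thesis
  proof (cases "x \<in> gen_support b")
    case True
    then have "gen_action b x \<notin> gen_support a"
      using assms gen_action_in_support[OF True] by auto
    with False show ?thesis
      by (simp add: gen_action_outside_support)
  next
    case False
    with \<open>x \<notin> gen_support a\<close> show ?thesis
      by (simp add: gen_action_outside_support)
  qed
qed

lemma word_action_rev: "word_action (rev w) (word_action w x) = x"
  by (induction w arbitrary: x) auto

lemma word_action_outside_support:
  "(\<And>g. g \<in> set w \<Longrightarrow> x \<notin> gen_support g) \<Longrightarrow> word_action w x = x"
  by (induction w) (auto simp: gen_action_outside_support)

lemma word_action_commute_relator:
  assumes "\<And>y. gen_action a (gen_action b y) = gen_action b (gen_action a y)"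
  shows "word_action (wpow [a, b] 2) = id"
  using assms by (simp add: fun_eq_iff numeral_2_eq_2)

lemma word_action_braid_relator:
  assumes "\<And>y. gen_action a (gen_action b (gen_action a y))
    = gen_action b (gen_action a (gen_action b y))"
  shows "word_action (wpow [a, b] 3) = id"
  using assms by (simp add: fun_eq_iff numeral_3_eq_3)

lemma gen_action_braid:
  assumes "1 \<le> i"
  shows "gen_action (G i) (gen_action (G (i + 1)) (gen_action (G i) x))
    = gen_action (G (i + 1)) (gen_action (G i) (gen_action (G (i + 1)) x))"
proof -
  consider "x = int i" | "x = int i + 1" | "x = int i + 2"
    | "x = - int i" | "x = - int i - 1" | "x = - int i - 2"
    | "x \<notin> gen_support (G i)" "x \<notin> gen_support (G (i + 1))"
    unfolding gen_support_def by fastforce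
  then show ?thesis
    by cases (use assms in \<open>simp_all add: gen_action_outside_support\<close>)
qed

lemma gen_action_braid_Gp:
  "gen_action Gp (gen_action (G 2) (gen_action Gp x))
    = gen_action (G 2) (gen_action Gp (gen_action (G 2) x))"
proof -
  consider "x \<in> {1, 2, 3, -1, -2, -3}" | "x \<notin> gen_support Gp" "x \<notin> gen_support (G 2)"
    unfolding gen_support_def by fastforce
  then show ?thesis
    by cases (auto simp: gen_action_outside_support)
qed

lemma gen_action_commute_Gp_G1:
  "gen_action Gp (gen_action (G 1) x) = gen_action (G 1) (gen_action Gp x)"
proof -
  consider "x \<in> {1, 2, -1, -2}" | "x \<notin> gen_support Gp" "x \<notin> gen_support (G 1)"
    unfolding gen_support_def by fastforce
  then show ?thesis
    by cases (auto simp: gen_action_outside_support)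
qed

lemma word_action_Dn_rels:
  assumes "r \<in> Dn_rels n"
  shows "word_action r = id"
proof -
  have commute_Gp: "gen_action Gp (gen_action (G i) y) = gen_action (G i) (gen_action Gp y)"
    if "1 \<le> i" "i \<noteq> 2" for i y
  proof (cases "i = 1")
    case True
    then show ?thesis using gen_action_commute_Gp_G1 by simp
  next
    case False
    with that show ?thesis by (intro gen_action_commute_disjoint) (auto simp: gen_support_def)
  qed
  from assms consider g where "r = [g, g]"
    | i where "r = wpow [G i, G (i + 1)] 3" "1 \<le> i"
    | i j where "r = wpow [G i, G j] 2" "i + 2 \<le> j \<or> j + 2 \<le> i"
    | "r = wpow [Gp, G 2] 3"
    | i where "r = wpow [Gp, G i] 2" "1 \<le> i" "i \<noteq> 2"
    unfolding Dn_rels_def by blast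
  then show ?thesis
  proof cases
    case 1
    then show ?thesis by auto
  next
    case 2
    then show ?thesis by (auto intro: word_action_braid_relator gen_action_braid)
  next
    case 3
    then show ?thesis
      by (auto intro!: word_action_commute_relator gen_action_commute_disjoint
          simp: gen_support_def)
  next
    case 4
    then show ?thesis by (auto intro: word_action_braid_relator gen_action_braid_Gp)
  next
    case 5
    then show ?thesis by (auto intro: word_action_commute_relator commute_Gp)
  qed
qed

lemma Dn_eq_word_action: "Dn_eq n u v \<Longrightarrow> word_action u = word_action v"
  by (induction rule: Dn_eq.induct) (auto simp: word_action_Dn_rels)

section \<open>The normal form\<close>

definition nf_tail :: "nat \<Rightarrow> nat \<Rightarrow> nat \<Rightarrow> gen list" where
  "nf_tail n j i = wpow (w_word (n - 1)) j @ wpow (t_word n) i"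

lemma word_action_down_word:
  assumes "1 \<le> k" "k \<le> n"
  shows "word_action (down_word k n) (int n) = int k"
  using assms(2)
proof (induction k rule: inc_induct)
  case (step m)
  then show ?case
    using assms by (simp add: down_word_snoc)
qed simp

lemma word_action_up_word_2:
  assumes "2 \<le> k"
  shows "word_action (up_word 2 k) (-2) = - int k"
  using assms
proof (induction k rule: dec_induct)
  case (step m)
  then show ?case
    by (simp add: up_word_snoc)
qed simp

lemma word_action_t_word:
  assumes "\<bar>s\<bar> = 1" "2 \<le> x" "x \<le> n"
  shows "word_action (t_word n) (s * int x) = s * (int x - 1)"
proof -
  have t: "t_word n = up_word 1 (x - 1) @ [G (x - 1)] @ up_word x n"
    using assms up_word_append[of 1 "x - 1" n] up_word_Cons[of "x - 1" n]
    by (simp add: t_word_eq_up_word)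
  have "word_action (up_word 1 (x - 1)) (s * int x) = s * int x"
    using assms by (intro word_action_outside_support) (auto simp: gen_support_def abs_mult)
  moreover have "gen_action (G (x - 1)) (s * int x) = s * (int x - 1)"
    using assms by (cases "s = 1") (auto simp: abs_if of_nat_diff split: if_splits)
  moreover have "word_action (up_word x n) (s * (int x - 1)) = s * (int x - 1)"
    using assms by (intro word_action_outside_support) (auto simp: gen_support_def abs_mult)
  ultimately show ?thesis
    unfolding t by simp
qed

lemma word_action_t_word_pow:
  assumes "\<bar>s\<bar> = 1" "i < x" "x \<le> n"
  shows "word_action (wpow (t_word n) i) (s * int x) = s * (int x - int i)"
  using assms(2,3)
proof (induction i arbitrary: x)
  case (Suc i)
  have t: "word_action (t_word n) (s * int x) = s * int (x - 1)"
    using Suc.prems word_action_t_word[OF assms(1), of x n] by (simp add: of_nat_diff)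
  have "word_action (wpow (t_word n) (Suc i)) (s * int x)
      = word_action (wpow (t_word n) i) (word_action (t_word n) (s * int x))"
    by simp
  also have "\<dots> = s * (int (x - 1) - int i)"
    unfolding t using Suc.prems by (intro Suc.IH) auto
  also have "\<dots> = s * (int x - int (Suc i))"
    using Suc.prems by (simp add: of_nat_diff)
  finally show ?case .
qed simp

lemma word_action_w_word:
  assumes "2 \<le> n"
  shows "word_action (w_word (n - 1)) (int n) = - int n"
  using assms word_action_down_word[of 2 n] word_action_up_word_2[of n]
  unfolding w_word_eq[OF assms] by simp

lemma word_action_nf_tail:
  assumes "2 \<le> n" "j \<le> 1" "i \<le> n - 1"
  shows "word_action (nf_tail n j i) (int n) = (if j = 0 then int n - int i else int i - int n)"
  using assms word_action_t_word_pow[of 1 i n n] word_action_t_word_pow[of "-1" i n n]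
    word_action_w_word[OF assms(1)]
  by (cases j) (auto simp: nf_tail_def)

lemma word_action_pos_rep: "1 \<le> k \<Longrightarrow> k \<le> n \<Longrightarrow> word_action (pos_rep n k) (int n) = int k"
  by (simp add: pos_rep_def word_action_down_word)

lemma word_action_neg_rep:
  assumes "2 \<le> n" "1 \<le> k" "k \<le> n"
  shows "word_action (neg_rep n k) (int n) = - int k"
  using assms word_action_down_word[of 2 n] word_action_down_word[of 1 n]
    word_action_up_word_2[of k]
  by (cases "k = 1") (simp_all add: neg_rep_def)

lemma coset_rep_eq_of_word_action:
  assumes "2 \<le> n" "coset_rep n R" "coset_rep n R'"
    and "word_action R (int n) = word_action R' (int n)"
  shows "R = R'"
  using assms word_action_pos_rep word_action_neg_rep unfolding coset_rep_def by fastforce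

lemma parabolic_word_fixes: "parabolic_word n h \<Longrightarrow> word_action h (int n) = int n"
  by (rule word_action_outside_support) (auto simp: parabolic_word_def gen_support_def)

lemma parabolic_word_valid_word: "parabolic_word n h \<Longrightarrow> valid_word n h"
  by (auto simp: parabolic_word_def valid_word_def)

lemma valid_word_iff_parabolic_word:
  assumes "2 \<le> n"
  shows "valid_word n w \<longleftrightarrow> parabolic_word (Suc n) w"
proof -
  have "valid_gen n g \<longleftrightarrow> g = Gp \<and> 3 \<le> Suc n \<or> (\<exists>i. g = G i \<and> 1 \<le> i \<and> i + 2 \<le> Suc n)" for g
    using assms by (cases g) auto
  then show ?thesis
    unfolding valid_word_def parabolic_word_def by blast
qed

lemma valid_word_nf_tail:
  assumes "2 \<le> n"
  shows "valid_word n (nf_tail n j i)"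
proof -
  have "valid_word n (w_word (n - 1))" "valid_word n (t_word n)"
    unfolding w_word_eq[OF assms] t_word_eq_up_word using assms by (auto simp: valid_word_def)
  then show ?thesis
    using set_wpow[of "w_word (n - 1)" j] set_wpow[of "t_word n" i]
    by (auto simp: valid_word_def nf_tail_def)
qed

lemma coset_rep_eq_nf_tail:
  assumes "2 \<le> n" "coset_rep n R"
  obtains h j i where "parabolic_word n h" "j \<le> 1" "i \<le> n - 1" "Dn_eq n R (h @ nf_tail n j i)"
proof -
  obtain k where k: "1 \<le> k" "k \<le> n" and R: "R = pos_rep n k \<or> R = neg_rep n k"
    using assms(2) unfolding coset_rep_def by blast
  define j :: nat where "j = (if R = pos_rep n k then 0 else 1)"
  define i where "i = n - k"
  have ji: "j \<le> 1" "i \<le> n - 1"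
    using k by (auto simp: j_def i_def)
  obtain h R' where hR': "parabolic_word n h" "coset_rep n R'" "Dn_eq n (nf_tail n j i) (h @ R')"
    using coset_decomp_valid_word[OF assms(1) valid_word_nf_tail[OF assms(1)]]
    unfolding coset_decomp_def by blast
  txt \<open>The last factor sends n where R does, so R is its coset representative.\<close>
  have "word_action R' (int n) = word_action (nf_tail n j i) (int n)"
    using Dn_eq_word_action[OF hR'(3)] parabolic_word_fixes[OF hR'(1)] by simp
  also have "\<dots> = word_action R (int n)"
    using R k assms(1) ji word_action_nf_tail word_action_pos_rep word_action_neg_rep
    by (auto simp: j_def i_def)
  finally have "R' = R"
    using coset_rep_eq_of_word_action assms hR'(2) by blast
  have "valid_word n (rev h)"
    using parabolic_word_valid_word hR'(1) by simp
  have "R = [] @ R"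
    by simp
  also have "Dn_eq n \<dots> ((rev h @ h) @ R)"
    using Dn_eq_rev_inverse[OF \<open>valid_word n (rev h)\<close>]
    by (intro Dn_eq_append) (rule Dn_eq.sym, simp)
  also have "\<dots> = rev h @ (h @ R')"
    using \<open>R' = R\<close> by simp
  also have "Dn_eq n \<dots> (rev h @ nf_tail n j i)"
    by (intro Dn_eq_prepend) (rule Dn_eq.sym[OF hR'(3)])
  finally have "Dn_eq n R (rev h @ nf_tail n j i)" .
  with that[of "rev h"] hR'(1) ji show ?thesis
    by simp
qed

lemma Dn_eq_parabolic_nf_tail:
  assumes "2 \<le> n" "valid_word n w"
  obtains h j i where "parabolic_word n h" "j \<le> 1" "i \<le> n - 1" "Dn_eq n w (h @ nf_tail n j i)"
proof -
  obtain h R where hR: "parabolic_word n h" "coset_rep n R" "Dn_eq n w (h @ R)"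
    using coset_decomp_valid_word[OF assms] unfolding coset_decomp_def by blast
  obtain h' j i where h': "parabolic_word n h'" "j \<le> 1" "i \<le> n - 1" "Dn_eq n R (h' @ nf_tail n j i)"
    using coset_rep_eq_nf_tail[OF assms(1) hR(2)] .
  have "Dn_eq n w (h @ (h' @ nf_tail n j i))"
    using hR(3) Dn_eq_prepend[OF h'(4)] by (rule Dn_eq.trans)
  with that[of "h @ h'"] hR(1) h' show ?thesis
    by simp
qed

lemma Dn_eq_mono:
  assumes "Dn_eq m u v" "m \<le> n"
  shows "Dn_eq n u v"
proof -
  have "Dn_rels m \<subseteq> Dn_rels n"
    using assms(2) unfolding Dn_rels_def valid_gen_def
    by (intro Un_mono subsetI; auto split: gen.splits; force)
  with assms(1) show ?thesis
    by (induction rule: Dn_eq.induct) (auto intro: Dn_eq.intros)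
qed

definition nf_exponents :: "nat \<Rightarrow> nat list \<Rightarrow> nat list \<Rightarrow> bool" where
  "nf_exponents n ii jj \<longleftrightarrow> length ii = n - 1 \<and> length jj = n - 1
     \<and> (\<forall>k < n - 1. ii ! k \<le> k + 1) \<and> (\<forall>k < n - 1. jj ! k \<le> 1)"

lemma nf_exponents_1: "nf_exponents (Suc 0) ii jj \<longleftrightarrow> ii = [] \<and> jj = []"
  by (simp add: nf_exponents_def)

lemma nf_exponents_snoc:
  assumes "1 \<le> n"
  shows "nf_exponents (Suc n) (ii @ [i]) (jj @ [j]) \<longleftrightarrow> nf_exponents n ii jj \<and> i \<le> n \<and> j \<le> 1"
  using assms by (auto simp: nf_exponents_def nth_append less_Suc_eq)

lemma nf_exponents_Suc_snoc:
  assumes "nf_exponents (Suc n) ii jj" "1 \<le> n"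
  obtains ii' i jj' j where "ii = ii' @ [i]" "jj = jj' @ [j]"
  using assms unfolding nf_exponents_def
  by (metis append_butlast_last_id diff_Suc_1 list.size(3) not_one_le_zero)

lemma nf_word_1 [simp]: "nf_word (Suc 0) [] [] = []"
  by (simp add: nf_word_def)

lemma nf_word_snoc:
  assumes "length ii = n - 1" "length jj = n - 1" "1 \<le> n"
  shows "nf_word (Suc n) (ii @ [i]) (jj @ [j]) = nf_word n ii jj @ nf_tail (Suc n) j i"
proof -
  have "[0..<Suc n - 1] = [0..<n - 1] @ [n - 1]"
    using assms(3) by (simp add: upt_Suc_append[symmetric])
  then show ?thesis
    using assms by (simp add: nf_word_def nf_tail_def nth_append)
      (intro arg_cong[where f = concat] map_cong; simp)
qed


lemma parabolic_word_nf_word: "parabolic_word (Suc n) (nf_word n ii jj)"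
proof -
  have "g = Gp \<and> 3 \<le> Suc n \<or> (\<exists>i. g = G i \<and> 1 \<le> i \<and> i + 2 \<le> Suc n)"
    if "k < n - 1" "g \<in> set (w_word (k + 1)) \<union> set (t_word (k + 2))" for g k
    using that by (auto simp: w_word_def t_word_def)
  moreover have "\<exists>k < n - 1. g \<in> set (w_word (k + 1)) \<union> set (t_word (k + 2))"
    if "g \<in> set (nf_word n ii jj)" for g
    using that set_wpow by (fastforce simp: nf_word_def)
  ultimately show ?thesis
    unfolding parabolic_word_def by blast
qed

lemma word_action_append_cancel:
  assumes "word_action (u @ t) = word_action (v @ t)"
  shows "word_action u = word_action v"
proof
  fix x
  have "word_action t (word_action u x) = word_action t (word_action v x)"
    using fun_cong[OF assms, of x] by simp
  then show "word_action u x = word_action v x"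
    using word_action_rev[of t] by metis
qed

lemma nf_tail_eq_of_word_action:
  assumes "2 \<le> n" "j \<le> 1" "i \<le> n - 1" "j' \<le> 1" "i' \<le> n - 1"
    and "word_action (nf_tail n j i) (int n) = word_action (nf_tail n j' i') (int n)"
  shows "i = i' \<and> j = j'"
  using assms word_action_nf_tail[of n j i] word_action_nf_tail[of n j' i']
  by (auto split: if_splits)

lemma nf_word_exists:
  assumes "1 \<le> n" "parabolic_word (Suc n) w"
  shows "\<exists>ii jj. nf_exponents n ii jj \<and> Dn_eq n w (nf_word n ii jj)"
  using assms
proof (induction n arbitrary: w rule: nat_induct_at_least)
  case base
  then have "w = []"
    by (cases w) (auto simp: parabolic_word_def)
  then show ?case
    by (auto simp: nf_exponents_1 Dn_eq.refl)
next
  case (Suc n)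
  then have "valid_word (Suc n) w"
    using valid_word_iff_parabolic_word[of "Suc n" w] by simp
  then obtain h j i where h: "parabolic_word (Suc n) h" "j \<le> 1" "i \<le> n"
      "Dn_eq (Suc n) w (h @ nf_tail (Suc n) j i)"
    using Dn_eq_parabolic_nf_tail[of "Suc n" w] Suc.hyps by auto
  obtain ii jj where ii: "nf_exponents n ii jj" "Dn_eq n h (nf_word n ii jj)"
    using Suc.IH[OF h(1)] by blast
  have "Dn_eq (Suc n) h (nf_word n ii jj)"
    using Dn_eq_mono[OF ii(2)] by simp
  then have "Dn_eq (Suc n) (h @ nf_tail (Suc n) j i) (nf_word n ii jj @ nf_tail (Suc n) j i)"
    by (rule Dn_eq_append)
  with h(4) have "Dn_eq (Suc n) w (nf_word n ii jj @ nf_tail (Suc n) j i)"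
    by (rule Dn_eq.trans)
  also have "nf_word n ii jj @ nf_tail (Suc n) j i = nf_word (Suc n) (ii @ [i]) (jj @ [j])"
    using ii(1) Suc.hyps by (simp add: nf_word_snoc nf_exponents_def)
  finally show ?case
    using ii(1) h Suc.hyps
    by (intro exI[of _ "ii @ [i]"] exI[of _ "jj @ [j]"]) (simp add: nf_exponents_snoc)
qed

lemma nf_word_action_inj:
  assumes "1 \<le> n" "nf_exponents n ii jj" "nf_exponents n ii' jj'"
    and "word_action (nf_word n ii jj) = word_action (nf_word n ii' jj')"
  shows "ii = ii' \<and> jj = jj'"
  using assms
proof (induction n arbitrary: ii jj ii' jj' rule: nat_induct_at_least)
  case base
  then show ?case
    by (simp add: nf_exponents_1)
next
  case (Suc n)
  obtain a i b j where ab: "ii = a @ [i]" "jj = b @ [j]"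
    using nf_exponents_Suc_snoc[OF Suc.prems(1) Suc.hyps] .
  obtain a' i' b' j' where ab': "ii' = a' @ [i']" "jj' = b' @ [j']"
    using nf_exponents_Suc_snoc[OF Suc.prems(2) Suc.hyps] .
  have e: "nf_exponents n a b" "i \<le> n" "j \<le> 1" "nf_exponents n a' b'" "i' \<le> n" "j' \<le> 1"
    using Suc.prems(1,2) Suc.hyps unfolding ab ab' by (simp_all add: nf_exponents_snoc)
  have nf_split: "nf_word (Suc n) ii jj = nf_word n a b @ nf_tail (Suc n) j i"
    and nf_split': "nf_word (Suc n) ii' jj' = nf_word n a' b' @ nf_tail (Suc n) j' i'"
    using Suc.hyps e unfolding ab ab' by (simp_all add: nf_word_snoc nf_exponents_def)
  have action: "word_action (nf_word n a b @ nf_tail (Suc n) j i)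
      = word_action (nf_word n a' b' @ nf_tail (Suc n) j' i')"
    using Suc.prems(3) unfolding nf_split nf_split' .
  have "word_action (nf_tail (Suc n) j i) (int (Suc n))
      = word_action (nf_tail (Suc n) j' i') (int (Suc n))"
    using fun_cong[OF action, of "int (Suc n)"]
      parabolic_word_fixes[OF parabolic_word_nf_word[of n a b]]
      parabolic_word_fixes[OF parabolic_word_nf_word[of n a' b']] by simp
  then have "i = i'" "j = j'"
    using nf_tail_eq_of_word_action[of "Suc n" j i j' i'] Suc.hyps e by auto
  then have "word_action (nf_word n a b) = word_action (nf_word n a' b')"
    using action word_action_append_cancel by blast
  then show ?case
    using Suc.IH e \<open>i = i'\<close> \<open>j = j'\<close> unfolding ab ab' by blast
qed

lemma nf_word_unique:
  assumes "1 \<le> n" "nf_exponents n ii jj" "nf_exponents n ii' jj'"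
    and "Dn_eq n (nf_word n ii jj) (nf_word n ii' jj')"
  shows "ii = ii' \<and> jj = jj'"
  using assms(1-3) by (rule nf_word_action_inj) (rule Dn_eq_word_action[OF assms(4)])

theorem mainTheorem1:
  fixes n :: nat
  assumes "2 \<le> n"
  shows "\<forall>w. valid_word n w \<longrightarrow>
    (\<exists>!(ii, jj). length ii = n - 1 \<and> length jj = n - 1
        \<and> (\<forall>k < n - 1. ii ! k \<le> k + 1) \<and> (\<forall>k < n - 1. jj ! k \<le> 1)
        \<and> Dn_eq n w (nf_word n ii jj))"
proof (intro allI impI)
  fix w
  assume "valid_word n w"
  then obtain ii jj where nf: "nf_exponents n ii jj" "Dn_eq n w (nf_word n ii jj)"
    using nf_word_exists[of n w] valid_word_iff_parabolic_word[OF assms] assms by auto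
  have "\<exists>!(ii, jj). nf_exponents n ii jj \<and> Dn_eq n w (nf_word n ii jj)"
  proof (rule ex1I[of _ "(ii, jj)"])
    fix p
    assume "case p of (ii', jj') \<Rightarrow> nf_exponents n ii' jj' \<and> Dn_eq n w (nf_word n ii' jj')"
    then obtain ii' jj'
      where p: "p = (ii', jj')" "nf_exponents n ii' jj'" "Dn_eq n w (nf_word n ii' jj')"
      by (cases p) auto
    then show "p = (ii, jj)"
      using nf_word_unique[OF _ p(2) nf(1)] Dn_eq.trans[OF Dn_eq.sym[OF p(3)] nf(2)] assms by simp
  qed (use nf in simp)
  then show "\<exists>!(ii, jj). length ii = n - 1 \<and> length jj = n - 1
        \<and> (\<forall>k < n - 1. ii ! k \<le> k + 1) \<and> (\<forall>k < n - 1. jj ! k \<le> 1)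
        \<and> Dn_eq n w (nf_word n ii jj)"
    by (simp add: nf_exponents_def conj_assoc)
qed

end
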